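(* Let $P$ and $Q$ be lower primes. Then $PQ-QP$ lies in the two-sided ideal of $\mathcal{A}$ generated by $\{(RL)D-D(RL) : D \text{ a lower prime}\}$.
   Context: $\mathcal{A}$ is the free associative $\mathbb{C}$-algebra on noncommuting generators $L,R$; words are finite products of these letters. A word is balanced if it contains equally many $L$'s and $R$'s. A word is prime if it is nonempty, balanced, and not a product of two nonempty balanced words. For a balanced word $W=a_1\cdots a_n$, $e_k(W)=\sum_{i=1}^k\overline{a_i}$ with $\overline{R}=1$, $\overline{L}=-1$. A prime $P$ of length $n$ is a lower prime if $e_k(P)<0$ for all $1\le k\le n-1$. *)

theory Defs
  imports Complex_Main
begin

datatype letter = L | R

type_synonym word = "letter list"

text \<open>Elements of the free associative algebra: finitely supported coefficient functions on words.\<close>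
type_synonym alg = "word \<Rightarrow> complex"

definition is_poly :: "alg \<Rightarrow> bool" where
  "is_poly f \<longleftrightarrow> finite {w. f w \<noteq> 0}"

definition mon :: "word \<Rightarrow> alg" where
  "mon u = (\<lambda>w. if w = u then 1 else 0)"

definition amult :: "alg \<Rightarrow> alg \<Rightarrow> alg" (infixl "\<star>" 70) where
  "f \<star> g = (\<lambda>w. \<Sum>i\<in>{0..length w}. f (take i w) * g (drop i w))"

inductive_set ideal_gen :: "alg set \<Rightarrow> alg set" for S where
  zero: "(\<lambda>_. 0) \<in> ideal_gen S"
| gen: "\<lbrakk>x \<in> S; is_poly a; is_poly b\<rbrakk> \<Longrightarrow> a \<star> x \<star> b \<in> ideal_gen S"
| add: "\<lbrakk>x \<in> ideal_gen S; y \<in> ideal_gen S\<rbrakk> \<Longrightarrow> (\<lambda>w. x w + y w) \<in> ideal_gen S"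

definition balanced :: "word \<Rightarrow> bool" where
  "balanced w \<longleftrightarrow> length (filter (\<lambda>a. a = L) w) = length (filter (\<lambda>a. a = R) w)"

definition prime_word :: "word \<Rightarrow> bool" where
  "prime_word w \<longleftrightarrow> w \<noteq> [] \<and> balanced w \<and>
     \<not> (\<exists>u v. u \<noteq> [] \<and> v \<noteq> [] \<and> balanced u \<and> balanced v \<and> w = u @ v)"

fun lval :: "letter \<Rightarrow> int" where
  "lval R = 1" | "lval L = -1"

definition e :: "nat \<Rightarrow> word \<Rightarrow> int" where
  "e k w = (\<Sum>i<k. lval (w ! i))"

definition lower_prime :: "word \<Rightarrow> bool" where
  "lower_prime P \<longleftrightarrow> prime_word P \<and> (\<forall>k. 1 \<le> k \<and> k \<le> length P - 1 \<longrightarrow> e k P < 0)"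

end

theory Submission
  imports Defs
begin

text \<open>Let \<open>\<approx>\<close> be the congruence on words generated by \<open>RL D \<approx> D RL\<close> for lower primes \<open>D\<close>.
  If \<open>x \<approx> y\<close> then \<open>x - y\<close> lies in the ideal, because an elementary step changes a monomial
  by \<open>a (RL D - D RL) b\<close>. So it suffices to show \<open>PQ \<approx> QP\<close>. Reading \<open>L\<close> as a down step and
  \<open>R\<close> as an up step, a lower prime is \<open>L W R\<close> where the path \<open>W\<close> returns to height 0 and
  never goes above it; cutting \<open>W\<close> at its returns to 0 writes it as a product of shorter lower
  primes. Hence \<open>RL\<close> commutes with \<open>W\<close>, and by induction on \<open>|P| + |Q|\<close> the products
  \<open>W\<close>, \<open>V\<close> in \<open>P = L W R\<close>, \<open>Q = L V R\<close> commute, so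
  \<open>L W RL V R \<approx> L RL W V R \<approx> L RL V W R \<approx> L V RL W R\<close>.\<close>

section \<open>Rewriting words in context\<close>

inductive rewrite_step :: "('a list \<Rightarrow> 'a list \<Rightarrow> bool) \<Rightarrow> 'a list \<Rightarrow> 'a list \<Rightarrow> bool"
  for rel where
  "rel u v \<Longrightarrow> rewrite_step rel (a @ u @ b) (a @ v @ b)"

lemma rewrite_step_append:
  "rewrite_step rel x y \<Longrightarrow> rewrite_step rel (a @ x @ b) (a @ y @ b)"
  by (induction rule: rewrite_step.induct) (metis append.assoc rewrite_step.intros)

lemma equivclp_rewrite_step_append:
  assumes "equivclp (rewrite_step rel) x y"
  shows "equivclp (rewrite_step rel) (a @ x @ b) (a @ y @ b)"
  using assms
proof (induction rule: equivclp_induct)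
  case base
  then show ?case by simp
next
  case (step y z)
  then show ?case
    by (blast intro: equivclp_into_equivclp rewrite_step_append)
qed

lemma equivclp_rewrite_step_commute_append:
  assumes "equivclp (rewrite_step rel) (x @ y) (y @ x)"
    and "equivclp (rewrite_step rel) (x @ z) (z @ x)"
  shows "equivclp (rewrite_step rel) (x @ y @ z) (y @ z @ x)"
proof -
  have "equivclp (rewrite_step rel) (x @ y @ z) (y @ x @ z)"
    using equivclp_rewrite_step_append[OF assms(1), of "[]" z] by simp
  also have "equivclp (rewrite_step rel) (y @ x @ z) (y @ z @ x)"
    using equivclp_rewrite_step_append[OF assms(2), of y "[]"] by simp
  finally show ?thesis by simp
qed

lemma equivclp_rewrite_step_commute_concat_right:
  assumes "\<And>q. q \<in> set qs \<Longrightarrow> equivclp (rewrite_step rel) (x @ q) (q @ x)"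
  shows "equivclp (rewrite_step rel) (x @ concat qs) (concat qs @ x)"
  using assms
  by (induction qs) (auto intro: equivclp_rewrite_step_commute_append)

lemma equivclp_rewrite_step_commute_concat:
  assumes "\<And>p q. p \<in> set ps \<Longrightarrow> q \<in> set qs \<Longrightarrow> equivclp (rewrite_step rel) (p @ q) (q @ p)"
  shows "equivclp (rewrite_step rel) (concat ps @ concat qs) (concat qs @ concat ps)"
  using assms
proof (induction ps)
  case Nil
  then show ?case by simp
next
  case (Cons p ps)
  have "equivclp (rewrite_step rel) (concat qs @ p) (p @ concat qs)"
    by (rule equivclp_sym, rule equivclp_rewrite_step_commute_concat_right) (use Cons.prems in simp)
  moreover have "equivclp (rewrite_step rel) (concat qs @ concat ps) (concat ps @ concat qs)"
    using Cons by (simp add: equivclp_sym)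
  ultimately show ?case
    by (auto intro: equivclp_sym dest: equivclp_rewrite_step_commute_append)
qed

section \<open>Monomials and the generated ideal\<close>

lemma mon_amult_mon: "mon u \<star> mon v = mon (u @ v)"
proof
  fix w
  have split_iff: "take i w = u \<and> drop i w = v \<longleftrightarrow> w = u @ v \<and> i = length u"
    if "i \<le> length w" for i
    using that by (auto simp: append_eq_conv_conj)
  have "(mon u \<star> mon v) w = (\<Sum>i\<in>{0..length w}. if w = u @ v \<and> i = length u then 1 else 0)"
    unfolding amult_def mon_def by (rule sum.cong) (auto simp: split_iff[symmetric])
  also have "\<dots> = mon (u @ v) w"
    unfolding mon_def by auto
  finally show "(mon u \<star> mon v) w = mon (u @ v) w" .
qed

lemma amult_diff_right: "f \<star> (\<lambda>w. g w - h w) = (\<lambda>w. (f \<star> g) w - (f \<star> h) w)"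
  unfolding amult_def by (simp add: algebra_simps sum_subtractf)

lemma amult_diff_left: "(\<lambda>w. g w - h w) \<star> f = (\<lambda>w. (g \<star> f) w - (h \<star> f) w)"
  unfolding amult_def by (simp add: algebra_simps sum_subtractf)

lemma amult_minus_left: "(\<lambda>w. - g w) \<star> f = (\<lambda>w. - (g \<star> f) w)"
  unfolding amult_def by (simp add: sum_negf)

lemma is_poly_mon: "is_poly (mon u)"
  unfolding is_poly_def mon_def by simp

lemma is_poly_minus: "is_poly f \<Longrightarrow> is_poly (\<lambda>w. - f w)"
  unfolding is_poly_def by simp

lemma ideal_gen_minus:
  assumes "f \<in> ideal_gen S"
  shows "(\<lambda>w. - f w) \<in> ideal_gen S"
  using assms
proof (induction rule: ideal_gen.induct)
  case zero
  then show ?case using ideal_gen.zero by simp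
next
  case (gen x a b)
  then have "(\<lambda>w. - a w) \<star> x \<star> b \<in> ideal_gen S"
    by (intro ideal_gen.gen is_poly_minus)
  then show ?case by (simp add: amult_minus_left)
next
  case (add x y)
  from add.IH have "(\<lambda>w. - x w + - y w) \<in> ideal_gen S"
    by (rule ideal_gen.add)
  then show ?case by simp
qed

lemma mon_diff_in_ideal_gen_if_rewrite_step:
  assumes "rewrite_step rel x y"
    and "\<And>u v. rel u v \<Longrightarrow> (\<lambda>w. mon u w - mon v w) \<in> S"
  shows "(\<lambda>w. mon x w - mon y w) \<in> ideal_gen S"
  using assms(1)
proof cases
  case (1 u v a b)
  have "mon a \<star> (\<lambda>w. mon u w - mon v w) \<star> mon b \<in> ideal_gen S"
    using 1 assms(2) by (intro ideal_gen.gen is_poly_mon)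
  then show ?thesis
    using 1 by (simp add: amult_diff_right amult_diff_left mon_amult_mon)
qed

lemma mon_diff_in_ideal_gen_if_equivclp:
  assumes "equivclp (rewrite_step rel) x y"
    and "\<And>u v. rel u v \<Longrightarrow> (\<lambda>w. mon u w - mon v w) \<in> S"
  shows "(\<lambda>w. mon x w - mon y w) \<in> ideal_gen S"
  using assms(1)
proof (induction rule: equivclp_induct)
  case base
  show ?case using ideal_gen.zero by simp
next
  case (step y z)
  from step(2) have "(\<lambda>w. mon y w - mon z w) \<in> ideal_gen S"
  proof
    assume "rewrite_step rel y z"
    then show ?thesis using assms(2) by (rule mon_diff_in_ideal_gen_if_rewrite_step)
  next
    assume "rewrite_step rel z y"
    then have "(\<lambda>w. - (mon z w - mon y w)) \<in> ideal_gen S"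
      using assms(2) by (intro ideal_gen_minus mon_diff_in_ideal_gen_if_rewrite_step)
    then show ?thesis by simp
  qed
  with step.IH have "(\<lambda>w. (mon x w - mon y w) + (mon y w - mon z w)) \<in> ideal_gen S"
    by (rule ideal_gen.add)
  then show ?case by simp
qed

section \<open>Heights and the factorization of lower primes\<close>

definition height :: "word \<Rightarrow> int" where
  "height w = sum_list (map lval w)"

lemma height_simps [simp]:
  "height [] = 0"
  "height (x # w) = lval x + height w"
  "height (u @ v) = height u + height v"
  unfolding height_def by simp_all

lemma e_eq_height_take: "k \<le> length w \<Longrightarrow> e k w = height (take k w)"
  by (induction k) (simp_all add: e_def take_Suc_conv_app_nth)

lemma balanced_iff_height: "balanced w \<longleftrightarrow> height w = 0"
proof -
  have "int (length (filter (\<lambda>a. a = R) w)) - int (length (filter (\<lambda>a. a = L) w)) = height w"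
  proof (induction w)
    case (Cons x w)
    then show ?case by (cases x) auto
  qed simp
  then show ?thesis unfolding balanced_def by linarith
qed

lemma lower_prime_iff:
  "lower_prime P \<longleftrightarrow>
     P \<noteq> [] \<and> height P = 0 \<and> (\<forall>k. 0 < k \<longrightarrow> k < length P \<longrightarrow> height (take k P) < 0)"
  (is "_ \<longleftrightarrow> ?rhs")
proof
  assume lower: "lower_prime P"
  have "height (take k P) < 0" if "0 < k" "k < length P" for k
  proof -
    have "e k P < 0"
      using lower that unfolding lower_prime_def by force
    with that show ?thesis by (simp add: e_eq_height_take)
  qed
  with lower show ?rhs
    unfolding lower_prime_def prime_word_def balanced_iff_height by blast
next
  assume rhs: ?rhs
  then have neg: "\<And>k. 0 < k \<Longrightarrow> k < length P \<Longrightarrow> height (take k P) < 0"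
    by blast
  have "\<not> balanced u" if "P = u @ v" "u \<noteq> []" "v \<noteq> []" for u v
    using neg[of "length u"] that by (simp add: balanced_iff_height)
  with rhs show "lower_prime P"
    unfolding lower_prime_def prime_word_def balanced_iff_height
    by (auto simp: e_eq_height_take)
qed

lemma concat_lower_primes_if_height_prefixes_nonpos:
  assumes "height w = 0" and "\<And>k. height (take k w) \<le> 0"
  shows "\<exists>ps. (\<forall>p\<in>set ps. lower_prime p) \<and> w = concat ps"
  using assms
proof (induction "length w" arbitrary: w rule: less_induct)
  case less
  show ?case
  proof (cases "w = []")
    case True
    then show ?thesis by (intro exI[of _ "[]"]) simp
  next
    case False
    define k where "k = (LEAST k. 0 < k \<and> height (take k w) = 0)"
    have w_returns: "0 < length w \<and> height (take (length w) w) = 0"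
      using False less.prems by simp
    then have k: "0 < k" "height (take k w) = 0"
      unfolding k_def by (metis (mono_tags, lifting) LeastI)+
    have "k \<le> length w"
      unfolding k_def using w_returns by (rule Least_le)
    have first_return: "height (take j w) \<noteq> 0" if "0 < j" "j < k" for j
      using that not_less_Least unfolding k_def by blast
    define p r where "p = take k w" and "r = drop k w"
    have w: "w = p @ r"
      by (simp add: p_def r_def)
    have len_p: "length p = k"
      using \<open>k \<le> length w\<close> by (simp add: p_def)
    have "lower_prime p"
      unfolding lower_prime_iff
    proof (intro conjI allI impI)
      show "p \<noteq> []" "height p = 0"
        using k len_p by (auto simp: p_def)
      fix j
      assume "0 < j" "j < length p"
      moreover have "take j p = take j w"
        using \<open>j < length p\<close> len_p by (simp add: p_def)
      ultimately show "height (take j p) < 0"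
        using first_return[of j] less.prems(2)[of j] len_p by simp
    qed
    have "height w = height p + height r"
      using w by simp
    then have "height r = 0"
      using less.prems(1) k(2) by (simp add: p_def)
    moreover have "height (take j r) \<le> 0" for j
      using less.prems(2)[of "k + j"] k(2) by (simp add: r_def take_add)
    moreover have "length r < length w"
      using k(1) \<open>k \<le> length w\<close> by (simp add: r_def)
    ultimately obtain qs where "\<forall>q\<in>set qs. lower_prime q" "r = concat qs"
      using less.hyps by blast
    with \<open>lower_prime p\<close> w show ?thesis
      by (intro exI[of _ "p # qs"]) simp
  qed
qed

lemma lower_prime_unwrap:
  assumes "lower_prime P"
  obtains W where "P = L # W @ [R]" "height W = 0" "\<And>k. height (take k W) \<le> 0"
proof -
  have P: "P \<noteq> []" "height P = 0"
    and neg: "\<And>k. 0 < k \<Longrightarrow> k < length P \<Longrightarrow> height (take k P) < 0"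
    using assms unfolding lower_prime_iff by auto
  obtain x P' where P_eq': "P = x # P'"
    using P(1) by (cases P) auto
  have "P' \<noteq> []"
    using P(2) P_eq' by (cases x) auto
  then obtain W y where P_eq: "P = x # W @ [y]"
    using P_eq' by (metis rev_exhaust)
  have "lval x < 0"
    using neg[of 1] P_eq by simp
  then have x: "x = L" by (cases x) auto
  have "lval x + height W < 0"
    using neg[of "Suc (length W)"] P_eq by simp
  moreover have "lval x + height W + lval y = 0"
    using P(2) P_eq by simp
  ultimately have y: "y = R" and W: "height W = 0"
    using x by (cases y, simp_all)+
  have "height (take k W) \<le> 0" for k
  proof (cases "k \<le> length W")
    case True
    then show ?thesis using neg[of "Suc k"] P_eq x by simp
  next
    case False
    then show ?thesis using W by simp
  qed
  with that P_eq x y W show ?thesis by blast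
qed

lemma lower_prime_factorization:
  assumes "lower_prime P"
  obtains ps where "P = L # concat ps @ [R]" "\<forall>p\<in>set ps. lower_prime p"
  using assms by (metis lower_prime_unwrap concat_lower_primes_if_height_prefixes_nonpos)

section \<open>Lower primes commute modulo the relations\<close>

inductive RL_swap :: "word \<Rightarrow> word \<Rightarrow> bool" where
  "lower_prime D \<Longrightarrow> RL_swap ([R, L] @ D) (D @ [R, L])"

abbreviation RL_equiv :: "word \<Rightarrow> word \<Rightarrow> bool" (infix "\<approx>" 50) where
  "x \<approx> y \<equiv> equivclp (rewrite_step RL_swap) x y"

lemma RL_commute_concat_lower_primes:
  assumes "\<forall>p\<in>set ps. lower_prime p"
  shows "[R, L] @ concat ps \<approx> concat ps @ [R, L]"
proof (rule equivclp_rewrite_step_commute_concat_right)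
  fix p
  assume "p \<in> set ps"
  then have "RL_swap ([R, L] @ p) (p @ [R, L])"
    using assms by (blast intro: RL_swap.intros)
  then have "rewrite_step RL_swap ([] @ ([R, L] @ p) @ []) ([] @ (p @ [R, L]) @ [])"
    by (rule rewrite_step.intros)
  then show "[R, L] @ p \<approx> p @ [R, L]"
    by auto
qed

lemma length_le_length_concat: "p \<in> set ps \<Longrightarrow> length p \<le> length (concat ps)"
  by (induction ps) auto

theorem lower_primes_commute:
  assumes "lower_prime P" and "lower_prime Q"
  shows "P @ Q \<approx> Q @ P"
  using assms
proof (induction "length P + length Q" arbitrary: P Q rule: less_induct)
  case less
  obtain ps where P: "P = L # concat ps @ [R]" and ps: "\<forall>p\<in>set ps. lower_prime p"
    using lower_prime_factorization[OF less.prems(1)] .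
  obtain qs where Q: "Q = L # concat qs @ [R]" and qs: "\<forall>q\<in>set qs. lower_prime q"
    using lower_prime_factorization[OF less.prems(2)] .
  let ?W = "concat ps" and ?V = "concat qs"
  have "?W @ ?V \<approx> ?V @ ?W"
  proof (rule equivclp_rewrite_step_commute_concat)
    fix p q
    assume "p \<in> set ps" "q \<in> set qs"
    moreover from this have "length p + length q < length P + length Q"
      using P Q length_le_length_concat[of p ps] length_le_length_concat[of q qs]
      by simp
    ultimately show "p @ q \<approx> q @ p"
      using less.hyps ps qs by blast
  qed
  have W: "?W @ [R, L] \<approx> [R, L] @ ?W" and V: "[R, L] @ ?V \<approx> ?V @ [R, L]"
    using RL_commute_concat_lower_primes[OF ps] RL_commute_concat_lower_primes[OF qs]
    by (simp_all add: equivclp_sym)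
  have "P @ Q = [L] @ (?W @ [R, L]) @ ?V @ [R]"
    using P Q by simp
  also have "\<dots> \<approx> [L, R, L] @ (?W @ ?V) @ [R]"
    using equivclp_rewrite_step_append[OF W, of "[L]" "?V @ [R]"] by simp
  also have "\<dots> \<approx> [L] @ ([R, L] @ ?V) @ ?W @ [R]"
    using equivclp_rewrite_step_append[OF \<open>?W @ ?V \<approx> ?V @ ?W\<close>, of "[L, R, L]" "[R]"]
    by simp
  also have "\<dots> \<approx> (L # ?V) @ ([R, L] @ ?W) @ [R]"
    using equivclp_rewrite_step_append[OF V, of "[L]" "?W @ [R]"] by simp
  also have "\<dots> \<approx> Q @ P"
    using equivclp_rewrite_step_append[OF equivclp_sym[OF W], of "L # ?V" "[R]"] P Q by simp
  finally show ?case .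
qed

theorem lemma5p2:
  assumes "lower_prime P" and "lower_prime Q"
  shows "(\<lambda>w. mon (P @ Q) w - mon (Q @ P) w)
           \<in> ideal_gen {(\<lambda>w. mon ([R, L] @ D) w - mon (D @ [R, L]) w) | D. lower_prime D}"
proof (rule mon_diff_in_ideal_gen_if_equivclp)
  show "P @ Q \<approx> Q @ P"
    using assms by (rule lower_primes_commute)
next
  fix u v
  assume "RL_swap u v"
  then show "(\<lambda>w. mon u w - mon v w)
      \<in> {(\<lambda>w. mon ([R, L] @ D) w - mon (D @ [R, L]) w) | D. lower_prime D}"
    by cases blast
qed

end
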